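(* For every integer $i\ge 1$, the sequence $\{d_i(m)\}_{m\ge i}$ is strictly ratio-log-convex; that is, for every $i\ge 1$ and every $m\ge i+2$, $$\left(\frac{d_i(m)}{d_i(m-1)}\right)^2<\frac{d_i(m-1)}{d_i(m-2)}\cdot\frac{d_i(m+1)}{d_i(m)}.$$
   Context: For integers $m\ge 0$ and $0\le i\le m$, the Boros–Moll numbers are $$d_i(m)=2^{-2m}\sum_{k=i}^{m}2^k\binom{2m-2k}{m-k}\binom{m+k}{k}\binom{k}{i}.$$ *)

theory Defs
  imports Complex_Main
begin

definition boros_moll :: "nat \<Rightarrow> nat \<Rightarrow> real" where
  "boros_moll i m = (1 / 2 ^ (2 * m)) *
     (\<Sum>k = i..m. 2 ^ k * real ((2 * m - 2 * k) choose (m - k))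
        * real ((m + k) choose k) * real (k choose i))"

end

theory Submission
  imports Defs
begin

(*
  With k = i + l and m = i + l + j, the summands of 4^m d_i(m) are hypergeometric in (l, j), and
  creative telescoping gives a three-term recurrence in m.  Hence the ratios
  r_p = d_i(i+p+1) / d_i(i+p) satisfy r_(p+1) = A_p - B_p / r_p with explicit rational A_p, B_p.
  An explicit rational lower bound L_p, exact at p = 0, is propagated by this recurrence.
  Eliminating r_(p+1) and r_(p+2) gives r_p r_(p+2) - r_(p+1)^2 = (r_p / r_(p+1)) Q(1 / r_p) for
  a quartic Q, and 1 / r_p lies in (0, 1 / L_p].  After the substitution 1 / r_p = s / L_p, all
  Bernstein coefficients of Q on 0 <= s <= 1 are polynomials in i - 1 and p with positive
  coefficients, so Q(1 / r_p) > 0.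
*)

text \<open>The summand of \<open>4\<^sup>m d\<^sub>i(m)\<close> with \<open>k = i + l\<close> and \<open>m = i + l + j\<close>.\<close>

definition bm_summand :: "nat \<Rightarrow> nat \<Rightarrow> nat \<Rightarrow> real" where
  "bm_summand i l j =
     2 ^ (i+l) * fact (2*j) * fact (2*i+2*l+j) / (fact j ^ 2 * fact (i+l+j) * fact i * fact l)"

definition bm_sum :: "nat \<Rightarrow> nat \<Rightarrow> real" where
  "bm_sum i p = (\<Sum>l\<le>p. bm_summand i l (p - l))"

lemma bm_summand_eq_binomials:
  "2 ^ (i+l) * real ((2 * (i+l+j) - 2 * (i+l)) choose ((i+l+j) - (i+l)))
     * real (((i+l+j) + (i+l)) choose (i+l)) * real ((i+l) choose i) = bm_summand i l j"
proof -
  have c1: "real ((2*j) choose j) = fact (2*j) / (fact j * fact j)"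
    using binomial_fact[of j "2*j", where 'a=real] by (simp add: mult_2)
  have c2: "real ((2*i+2*l+j) choose (i+l)) = fact (2*i+2*l+j) / (fact (i+l) * fact (i+l+j))"
    using binomial_fact[of "i+l" "2*i+2*l+j", where 'a=real] by (simp add: algebra_simps)
  have c3: "real ((i+l) choose i) = fact (i+l) / (fact i * fact l)"
    using binomial_fact[of i "i+l", where 'a=real] by simp
  have e: "2 * (i+l+j) - 2 * (i+l) = 2*j" "(i+l+j) - (i+l) = j" "(i+l+j) + (i+l) = 2*i+2*l+j"
    by auto
  show ?thesis unfolding e c1 c2 c3 bm_summand_def
    by (simp add: field_simps power2_eq_square)
qed

lemma boros_moll_eq_bm_sum: "boros_moll i (i+p) = bm_sum i p / 4 ^ (i+p)"
proof -
  have shift: "\<And>f :: nat \<Rightarrow> real. (\<Sum>k = i..i+p. f k) = (\<Sum>l = 0..p. f (l+i))"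
    using sum.shift_bounds_cl_nat_ivl[of _ 0 i p] by (simp add: add.commute)
  have "(\<Sum>k = i..i+p. 2 ^ k * real ((2 * (i+p) - 2 * k) choose ((i+p) - k))
        * real (((i+p) + k) choose k) * real (k choose i))
      = (\<Sum>l = 0..p. 2 ^ (l+i) * real ((2 * (i+p) - 2 * (l+i)) choose ((i+p) - (l+i)))
        * real (((i+p) + (l+i)) choose (l+i)) * real ((l+i) choose i))"
    by (rule shift)
  also have "\<dots> = bm_sum i p"
    unfolding bm_sum_def atLeast0AtMost
  proof (rule sum.cong[OF refl])
    fix l assume "l \<in> {..p}"
    then obtain j where p: "p = l + j" by (metis atMost_iff le_add_diff_inverse)
    show "2 ^ (l+i) * real ((2 * (i+p) - 2 * (l+i)) choose ((i+p) - (l+i)))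
        * real (((i+p) + (l+i)) choose (l+i)) * real ((l+i) choose i) = bm_summand i l (p - l)"
      using bm_summand_eq_binomials[of i l j] unfolding p by (simp add: ac_simps)
  qed
  finally show ?thesis
    unfolding boros_moll_def power_mult by simp
qed

lemma bm_summand_pos: "0 < bm_summand i l j"
  unfolding bm_summand_def by (intro divide_pos_pos mult_pos_pos) auto

lemma bm_sum_pos: "0 < bm_sum i p"
  unfolding bm_sum_def by (rule sum_pos) (auto intro: bm_summand_pos)

lemma bm_summand_Suc_j:
  "bm_summand i l (Suc j) = bm_summand i l j * (2 * (2*real j+1) * (2*real i+2*real l+real j+1))
     / ((real j+1) * (real i+real l+real j+1))"
proof -
  have "2 * Suc j = Suc (Suc (2*j))" "2*i+2*l+Suc j = Suc (2*i+2*l+j)" "i+l+Suc j = Suc (i+l+j)"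
    by auto
  moreover have "fact j > (0::real)" "fact (i+l+j) > (0::real)" "fact i > (0::real)"
    "fact l > (0::real)"
    by auto
  ultimately show ?thesis unfolding bm_summand_def fact_Suc
    by (simp only: of_nat_Suc of_nat_add of_nat_mult power2_eq_square)
      (simp add: divide_simps, algebra)
qed

lemma bm_summand_Suc_l:
  "bm_summand i (Suc l) j = bm_summand i l (Suc j) * ((real j+1) * (2*real i+2*real l+real j+2))
     / ((2*real j+1) * (real l+1))"
proof -
  have "2 * Suc j = Suc (Suc (2*j))" "2*i+2*l+Suc j = Suc (2*i+2*l+j)" "i+l+Suc j = Suc (i+l+j)"
     "2*i+2*Suc l+j = Suc (Suc (2*i+2*l+j))" "i + Suc l + j = Suc (i+l+j)" "i + Suc l = Suc (i+l)"
    by auto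
  moreover have "fact j > (0::real)" "fact (i+l+j) > (0::real)" "fact i > (0::real)"
    "fact l > (0::real)"
    by auto
  ultimately show ?thesis unfolding bm_summand_def fact_Suc
    by (simp only: of_nat_Suc of_nat_add of_nat_mult power2_eq_square)
      (simp add: divide_simps, algebra)
qed


definition bm_rec_a :: "real \<Rightarrow> real \<Rightarrow> real" where
  "bm_rec_a x m = 8*m^2 + 24*m + 19 - 4*x^2"

definition bm_rec_b :: "real \<Rightarrow> real \<Rightarrow> real" where
  "bm_rec_b x m = (m+x+1) * (4*m+3) * (4*m+5)"

text \<open>The three-term recurrence of the Boros--Moll numbers reads
  \<open>bm_rec_op i m u\<^sub>0 u\<^sub>1 u\<^sub>2 = 0\<close> for \<open>u\<^sub>k = 4\<^sup>m\<^sup>+\<^sup>k d\<^sub>i(m+k)\<close>.\<close>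

definition bm_rec_op :: "real \<Rightarrow> real \<Rightarrow> real \<Rightarrow> real \<Rightarrow> real \<Rightarrow> real" where
  "bm_rec_op x m u0 u1 u2 =
     4*(m+2-x)*(m+1)*(m+2) * u2 - 8*(m+1)*bm_rec_a x m * u1 + 16*bm_rec_b x m * u0"

lemma bm_rec_op_add:
  "bm_rec_op x m (a0 + b0) (a1 + b1) (a2 + b2) = bm_rec_op x m a0 a1 a2 + bm_rec_op x m b0 b1 b2"
  unfolding bm_rec_op_def by algebra

lemma bm_rec_op_sum:
  "bm_rec_op x m (\<Sum>l\<in>A. f0 l) (\<Sum>l\<in>A. f1 l) (\<Sum>l\<in>A. f2 l)
    = (\<Sum>l\<in>A. bm_rec_op x m (f0 l) (f1 l) (f2 l))"
  unfolding bm_rec_op_def by (simp add: sum_distrib_left sum_subtractf sum.distrib)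

text \<open>Zeilberger's certificate: applied to the summands, the recurrence telescopes in \<open>l\<close>.\<close>

definition bm_cert_poly :: "real \<Rightarrow> real \<Rightarrow> real \<Rightarrow> real" where
  "bm_cert_poly x m k = 8 - 14*k + 8*k^2 + 8*x + 4*x*k - 4*x*k^2 + 20*m - 20*m*k + 4*m*k^2
     + 12*m*x + 16*m^2 - 8*m^2*k + 4*m^2*x + 4*m^3"

definition bm_cert :: "nat \<Rightarrow> real \<Rightarrow> nat \<Rightarrow> nat \<Rightarrow> real" where
  "bm_cert i m l j = real l * (2*real j+1) * bm_cert_poly (real i) m (real i + real l)
     / ((real j+1) * (real j+2)) * bm_summand i l j"

lemma bm_rec_op_summand_telescopes:
  assumes m: "m = real i + real l + real j + 1"
  shows "bm_rec_op (real i) m (bm_summand i l (j+1)) (bm_summand i l (j+2)) (bm_summand i l (j+3))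
    = 16 * (bm_cert i m (l+1) j - bm_cert i m l (j+1))"
proof -
  define u where "u = bm_summand i l (j+1)"
  have u_pos: "u > 0" unfolding u_def by (rule bm_summand_pos)
  have e2: "bm_summand i l (j+2) = u * (2*(2*(real j+1)+1)*(2*real i+2*real l+(real j+1)+1))
      / ((real j+2)*(real i+real l+real j+2))"
    using bm_summand_Suc_j[of i l "j+1"] unfolding u_def by (simp add: add_ac)
  have e3: "bm_summand i l (j+3)
      = bm_summand i l (j+2) * (2*(2*(real j+2)+1)*(2*real i+2*real l+(real j+2)+1))
        / ((real j+3)*(real i+real l+real j+3))"
    using bm_summand_Suc_j[of i l "j+2"] by (simp add: add_ac numeral_3_eq_3 numeral_2_eq_2)
  have e4: "bm_summand i (l+1) j
      = u * ((real j+1)*(2*real i+2*real l+real j+2)) / ((2*real j+1)*(real l+1))"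
    using bm_summand_Suc_l[of i l j] unfolding u_def by simp
  have c: "real (j+1) = real j + 1" "real (l+1) = real l + 1" by simp_all
  show ?thesis
    unfolding e3 e2 e4 bm_cert_def bm_cert_poly_def c u_def[symmetric] m
      bm_rec_op_def bm_rec_a_def bm_rec_b_def
    using u_pos by (simp add: divide_simps) algebra
qed

lemma bm_rec_op_boundary:
  assumes m: "m = real i + real p"
  shows "bm_rec_op (real i) m (bm_summand i p 0) (bm_summand i p 1 + bm_summand i (p+1) 0)
      (bm_summand i p 2 + bm_summand i (p+1) 1 + bm_summand i (p+2) 0) + 16 * bm_cert i m p 0 = 0"
proof -
  define x where "x = real i"
  define y where "y = real p"
  have xy: "x \<ge> 0" "y \<ge> 0" unfolding x_def y_def by auto
  have e1: "bm_summand i p 1 * (x+y+1) = bm_summand i p 0 * (2*(2*x+2*y+1))"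
    using bm_summand_Suc_j[of i p 0] xy unfolding x_def y_def by (simp add: field_simps)
  have e2: "bm_summand i p 2 * (2*(x+y+2)) = bm_summand i p 1 * (6*(2*x+2*y+2))"
    using bm_summand_Suc_j[of i p 1] xy unfolding x_def y_def by (simp add: field_simps numeral_2_eq_2)
  have e3: "bm_summand i (p+1) 0 * (y+1) = bm_summand i p 1 * (2*x+2*y+2)"
    using bm_summand_Suc_l[of i p 0] xy unfolding x_def y_def by (simp add: field_simps)
  have e4: "bm_summand i (p+1) 1 * (x+y+2) = bm_summand i (p+1) 0 * (2*(2*x+2*y+3))"
    using bm_summand_Suc_j[of i "p+1" 0] xy unfolding x_def y_def by (simp add: field_simps)
  have e5: "bm_summand i (p+2) 0 * (y+2) = bm_summand i (p+1) 1 * (2*x+2*y+4)"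
    using bm_summand_Suc_l[of i "p+1" 0] xy unfolding x_def y_def by (simp add: field_simps numeral_2_eq_2)
  have nz: "(x+y+1)*(x+y+2)*(y+1)*(y+2) \<noteq> 0" using xy by (simp add: add_nonneg_eq_0_iff)
  have "(x+y+1)*(x+y+2)*(y+1)*(y+2) * (bm_rec_op x (x+y) (bm_summand i p 0)
      (bm_summand i p 1 + bm_summand i (p+1) 0)
      (bm_summand i p 2 + bm_summand i (p+1) 1 + bm_summand i (p+2) 0) + 16 * bm_cert i (x+y) p 0)
    = 0"
    unfolding bm_rec_op_def bm_rec_a_def bm_rec_b_def bm_cert_def bm_cert_poly_def
      x_def[symmetric] y_def[symmetric]
    using e1 e2 e3 e4 e5 by simp algebra
  with nz show ?thesis unfolding m x_def y_def by simp
qed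

lemma bm_sum_split:
  "bm_sum i (p+k) = (\<Sum>l<p. bm_summand i l (p+k-l)) + (\<Sum>l\<le>k. bm_summand i (p+l) (k-l))"
proof -
  have "bm_sum i (p+k) = (\<Sum>l\<in>{..<p} \<union> {p..p+k}. bm_summand i l (p+k-l))"
    unfolding bm_sum_def by (rule sum.cong) auto
  also have "\<dots> = (\<Sum>l<p. bm_summand i l (p+k-l)) + (\<Sum>l=p..p+k. bm_summand i l (p+k-l))"
    by (rule sum.union_disjoint) auto
  also have "(\<Sum>l=p..p+k. bm_summand i l (p+k-l)) = (\<Sum>l\<le>k. bm_summand i (p+l) (k-l))"
    using sum.shift_bounds_cl_nat_ivl[of "\<lambda>l. bm_summand i l (p+k-l)" 0 p k]
    by (simp add: atLeast0AtMost add.commute)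
  finally show ?thesis .
qed

lemma bm_sum_recurrence:
  "bm_rec_op (real i) (real i + real p) (bm_sum i p) (bm_sum i (p+1)) (bm_sum i (p+2)) = 0"
proof -
  define m where "m = real i + real p"
  define G where "G l = 16 * bm_cert i m l (p - l)" for l
  have "bm_rec_op (real i) m (\<Sum>l<p. bm_summand i l (p-l)) (\<Sum>l<p. bm_summand i l (p+1-l))
      (\<Sum>l<p. bm_summand i l (p+2-l)) = (\<Sum>l<p. G (Suc l) - G l)"
    unfolding bm_rec_op_sum
  proof (rule sum.cong[OF refl])
    fix l assume "l \<in> {..<p}"
    then obtain j where p: "p = l + j + 1" using less_imp_Suc_add by fastforce
    then have "p-l = j+1" "p+1-l = j+2" "p+2-l = j+3" "p - Suc l = j" by auto
    moreover have "m = real i + real l + real j + 1" using p by (simp add: m_def)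
    ultimately show "bm_rec_op (real i) m (bm_summand i l (p-l)) (bm_summand i l (p+1-l))
        (bm_summand i l (p+2-l)) = G (Suc l) - G l"
      unfolding G_def using bm_rec_op_summand_telescopes by simp
  qed
  also have "\<dots> = G p - G 0"
    by (rule sum_lessThan_telescope)
  also have "\<dots> = 16 * bm_cert i m p 0"
    by (simp add: G_def bm_cert_def)
  finally show ?thesis
    using bm_sum_split[of i p 0] bm_sum_split[of i p 1] bm_sum_split[of i p 2]
      bm_rec_op_boundary[OF m_def]
    by (simp add: numeral_2_eq_2 bm_rec_op_add flip: m_def)
qed

definition bm_ratio :: "nat \<Rightarrow> nat \<Rightarrow> real" where
  "bm_ratio i p = bm_sum i (p+1) / (4 * bm_sum i p)"

lemma boros_moll_ratio: "boros_moll i (i+p+1) / boros_moll i (i+p) = bm_ratio i p"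
proof -
  have "boros_moll i (i+p+1) / boros_moll i (i+p)
      = (bm_sum i (p+1) / (4 * 4^(i+p))) / (bm_sum i p / 4^(i+p))"
    using boros_moll_eq_bm_sum[of i "p+1"] boros_moll_eq_bm_sum[of i p] by (simp add: ac_simps)
  also have "\<dots> = bm_ratio i p"
    unfolding bm_ratio_def using bm_sum_pos[of i p] by (simp add: field_simps)
  finally show ?thesis .
qed

definition ratio_rec_a :: "real \<Rightarrow> real \<Rightarrow> real" where
  "ratio_rec_a x y = bm_rec_a x (x+y) / (2*(y+2)*(x+y+2))"

definition ratio_rec_b :: "real \<Rightarrow> real \<Rightarrow> real" where
  "ratio_rec_b x y = bm_rec_b x (x+y) / (4*(y+2)*(x+y+1)*(x+y+2))"

lemma ratio_rec_b_nonneg: "0 \<le> x \<Longrightarrow> 0 \<le> y \<Longrightarrow> 0 \<le> ratio_rec_b x y"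
  unfolding ratio_rec_b_def bm_rec_b_def by simp

lemma bm_ratio_Suc:
  "bm_ratio i (Suc p) = ratio_rec_a (real i) (real p) - ratio_rec_b (real i) (real p) / bm_ratio i p"
proof -
  define x where "x = real i"
  define y where "y = real p"
  have xy: "x \<ge> 0" "y \<ge> 0" unfolding x_def y_def by auto
  have solve: "s2 / (4*s1) = a / (2*q1*q2) - (b / (4*q1*q3*q2)) / (s1 / (4*s0))"
    if "4*q1*q3*q2 * s2 - 8*q3*a * s1 + 16*b * s0 = 0" "q1 > 0" "q2 > 0" "q3 > 0" "s0 > 0" "s1 > 0"
    for a b q1 q2 q3 s0 s1 s2 :: real
  proof -
    from that have "s2 = (8*q3*a*s1 - 16*b*s0) / (4*q1*q3*q2)"
      by (simp add: field_simps)
    with that show ?thesis by (simp add: field_simps)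
  qed
  have "4*(y+2)*(x+y+1)*(x+y+2) * bm_sum i (p+1+1) - 8*(x+y+1)*bm_rec_a x (x+y) * bm_sum i (p+1)
      + 16*bm_rec_b x (x+y) * bm_sum i p = 0"
    using bm_sum_recurrence[of i p] unfolding bm_rec_op_def x_def y_def by (simp add: ac_simps)
  then show ?thesis
    unfolding bm_ratio_def ratio_rec_a_def ratio_rec_b_def Suc_eq_plus1
      x_def[symmetric] y_def[symmetric]
    by (rule solve) (use xy bm_sum_pos in auto)
qed

lemma bm_ratio_0: "bm_ratio i 0 = (2*real i+1) * (2*real i+3) / (2*(real i+1))"
proof -
  have "bm_sum i 1 = bm_summand i 0 1 + bm_summand i 1 0" "bm_sum i 0 = bm_summand i 0 0"
    unfolding bm_sum_def by (simp_all add: atMost_Suc)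
  moreover have "bm_summand i 1 0 = bm_summand i 0 1 * (2*real i+2)"
    using bm_summand_Suc_l[of i 0 0] by simp
  ultimately have "bm_sum i 1 = bm_summand i 0 1 * (2*real i+3)"
    by (simp add: algebra_simps)
  also have "\<dots> = bm_summand i 0 0 * (2*(2*real i+1)*(2*real i+3)) / (real i+1)"
    using bm_summand_Suc_j[of i 0 0] by simp
  finally show ?thesis
    unfolding bm_ratio_def \<open>bm_sum i 0 = bm_summand i 0 0\<close>
    using bm_summand_pos[of i 0 0] by (simp add: field_simps)
qed

text \<open>The lower bound for \<open>d\<^sub>i(m+1)/d\<^sub>i(m)\<close> at \<open>m = x + y\<close>; it is exact at \<open>y = 0\<close> and
  propagates through the ratio recurrence.\<close>

definition lb_den :: "real \<Rightarrow> real \<Rightarrow> real" where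
  "lb_den x y = x^2 + y + 5*x"

definition lb_num :: "real \<Rightarrow> real \<Rightarrow> real" where
  "lb_num x y = (4*(x+y)^2 + 7*(x+y) + x + 3) * lb_den x y + y*x^2"

definition ratio_lb :: "real \<Rightarrow> real \<Rightarrow> real" where
  "ratio_lb x y = lb_num x y / (2*(y+1)*(x+y+1)*lb_den x y)"

lemma lb_den_pos: "0 < x \<Longrightarrow> 0 \<le> y \<Longrightarrow> 0 < lb_den x y"
  unfolding lb_den_def by (simp add: add_pos_nonneg)

lemma lb_num_pos: "0 < x \<Longrightarrow> 0 \<le> y \<Longrightarrow> 0 < lb_num x y"
  unfolding lb_num_def using lb_den_pos[of x y] by (simp add: add_pos_nonneg)

lemma ratio_lb_pos: "0 < x \<Longrightarrow> 0 \<le> y \<Longrightarrow> 0 < ratio_lb x y"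
  unfolding ratio_lb_def using lb_num_pos lb_den_pos by (simp add: add_pos_nonneg)

lemma ratio_lb_0: "0 < x \<Longrightarrow> ratio_lb x 0 = (2*x+1) * (2*x+3) / (2*(x+1))"
proof -
  assume "0 < x"
  then have "0 < lb_den x 0" by (rule lb_den_pos) simp
  moreover have "lb_num x 0 = (2*x+1) * (2*x+3) * lb_den x 0"
    unfolding lb_num_def by algebra
  ultimately show ?thesis unfolding ratio_lb_def by simp
qed

text \<open>Here and in the positivity lemmas for the \<open>gap_coeff\<close> polynomials below, \<open>x = j + 1\<close>
  (that is, \<open>i \<ge> 1\<close>) turns the polynomial into one in \<open>j\<close> and \<open>p\<close> with nonnegative coefficients.\<close>

lemma lb_step_poly_pos:
  fixes x y :: real
  assumes "x = real j + 1" and "y = real p"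
  shows "0 < lb_num x y * (bm_rec_a x (x+y) * lb_den x (y+1) - lb_num x (y+1))
      - bm_rec_b x (x+y) * (y+1) * lb_den x y * lb_den x (y+1)"
proof -
  have "lb_num x y * (bm_rec_a x (x+y) * lb_den x (y+1) - lb_num x (y+1))
      - bm_rec_b x (x+y) * (y+1) * lb_den x y * lb_den x (y+1) =
      real (162 + 225*p + 71*p^2 + 8*p^3 + 585*j + 745*j*p + 174*j*p^2 + 14*j*p^3 + 807*j^2 +
        941*j^2*p + 140*j^2*p^2 + 6*j^2*p^3 + 521*j^3 + 559*j^3*p + 38*j^3*p^2 + 151*j^4 +
        152*j^4*p + j^4*p^2 + 14*j^5 + 14*j^5*p)" (is "_ = real ?n")
    unfolding assms bm_rec_a_def bm_rec_b_def lb_den_def lb_num_def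
    by (simp only: of_nat_add of_nat_mult of_nat_power of_nat_numeral of_nat_1) algebra
  moreover have "0 < ?n" by simp
  ultimately show ?thesis by (simp only: of_nat_0_less_iff)
qed

lemma ratio_lb_Suc:
  fixes x y :: real
  assumes "x = real j + 1" and "y = real p"
  shows "ratio_lb x (y+1) < ratio_rec_a x y - ratio_rec_b x y / ratio_lb x y"
proof -
  have xy: "x \<ge> 1" "y \<ge> 0" using assms by auto
  have pos: "0 < lb_num x y" "0 < lb_den x y" "0 < lb_den x (y+1)"
    using lb_num_pos lb_den_pos xy by auto
  have combine: "a/(2*q1*q2) - (b/(4*q1*q3*q2)) / (n0/(2*q4*q3*h0)) - n1/(2*q1*q2*h1)
      = (n0*(a*h1 - n1) - b*q4*h0*h1) / (2*q1*q2*n0*h1)"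
    if "q1 \<noteq> 0" "q2 \<noteq> 0" "q3 \<noteq> 0" "q4 \<noteq> 0" "n0 \<noteq> 0" "h0 \<noteq> 0" "h1 \<noteq> 0"
    for a b q1 q2 q3 q4 n0 n1 h0 h1 :: real
    using that by (simp add: field_simps)
  have "ratio_lb x (y+1) = lb_num x (y+1) / (2*(y+2)*(x+y+2)*lb_den x (y+1))"
    unfolding ratio_lb_def by (simp add: algebra_simps numeral_2_eq_2)
  then have "ratio_rec_a x y - ratio_rec_b x y / ratio_lb x y - ratio_lb x (y+1)
      = (lb_num x y * (bm_rec_a x (x+y) * lb_den x (y+1) - lb_num x (y+1))
          - bm_rec_b x (x+y) * (y+1) * lb_den x y * lb_den x (y+1))
        / (2*(y+2)*(x+y+2)*lb_num x y*lb_den x (y+1))"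
    unfolding ratio_rec_a_def ratio_rec_b_def ratio_lb_def[of x y]
    by (simp only:) (rule combine, use pos xy in auto)
  moreover have "0 < 2*(y+2)*(x+y+2)*lb_num x y*lb_den x (y+1)"
    using pos xy by simp
  ultimately have "0 < ratio_rec_a x y - ratio_rec_b x y / ratio_lb x y - ratio_lb x (y+1)"
    using lb_step_poly_pos[OF assms] by simp
  then show ?thesis by simp
qed

lemma bm_ratio_ge_lb:
  assumes "1 \<le> i"
  shows "ratio_lb (real i) (real p) \<le> bm_ratio i p"
proof (induction p)
  case 0
  then show ?case using assms by (simp add: bm_ratio_0 ratio_lb_0)
next
  case (Suc p)
  obtain j where j: "real i = real j + 1"
    using assms by (cases i) auto
  define x where "x = real i"
  define y where "y = real p"
  have xy: "x \<ge> 1" "y \<ge> 0" using assms unfolding x_def y_def by auto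
  have "0 < ratio_lb x y" using ratio_lb_pos xy by simp
  then have "ratio_rec_b x y / bm_ratio i p \<le> ratio_rec_b x y / ratio_lb x y"
    using Suc.IH ratio_rec_b_nonneg[of x y] xy unfolding x_def y_def
    by (simp add: divide_left_mono)
  moreover have "ratio_lb x (y+1) < ratio_rec_a x y - ratio_rec_b x y / ratio_lb x y"
    using ratio_lb_Suc j unfolding x_def y_def by blast
  ultimately show ?case
    unfolding bm_ratio_Suc of_nat_Suc add.commute[of 1] x_def y_def by simp
qed

lemma quartic_pos_bernstein:
  fixes c0 c1 c2 c3 c4 s :: real
  assumes "0 \<le> s" "s \<le> 1"
    and "0 < c0" "0 < 4*c0 + c1" "0 < 6*c0 + 3*c1 + c2" "0 < 4*c0 + 3*c1 + 2*c2 + c3"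
    and "0 < c0 + c1 + c2 + c3 + c4"
  shows "0 < c0 + c1*s + c2*s^2 + c3*s^3 + c4*s^4"
proof -
  have bernstein: "c0 + c1*s + c2*s^2 + c3*s^3 + c4*s^4 = c0*(1-s)^4 + (4*c0 + c1)*(s*(1-s)^3)
     + (6*c0 + 3*c1 + c2)*(s^2*(1-s)^2) + (4*c0 + 3*c1 + 2*c2 + c3)*(s^3*(1-s))
     + (c0 + c1 + c2 + c3 + c4)*s^4"
    by algebra
  have "0 \<le> s*(1-s)^3" "0 \<le> s^2*(1-s)^2" "0 \<le> s^3*(1-s)" using assms by auto
  then have "0 \<le> (4*c0 + c1)*(s*(1-s)^3) + (6*c0 + 3*c1 + c2)*(s^2*(1-s)^2)
      + (4*c0 + 3*c1 + 2*c2 + c3)*(s^3*(1-s))"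
    using assms by simp
  moreover have "0 < c0*(1-s)^4 + (c0 + c1 + c2 + c3 + c4)*s^4"
  proof (cases "s = 1")
    case False
    with assms have "0 < c0*(1-s)^4" by simp
    then show ?thesis using assms by (simp add: add_pos_nonneg)
  qed (use assms in simp)
  ultimately show ?thesis unfolding bernstein by linarith
qed

lemma two_step_recurrence_gap:
  fixes r0 r1 r2 a b a' b' v :: real
  assumes "r1 \<noteq> 0" and "r0 * v = 1" and "r1 = a - b * v" and "r2 = a' - b' / r1"
  shows "r0 * r2 - r1^2
    = r0 / r1 * (a'*a - b' - (a'*b + a^3) * v + 3*a^2*b * v^2 - 3*a*b^2 * v^3 + b^3 * v^4)"
proof -
  have "a'*a - b' - (a'*b + a^3) * v + 3*a^2*b * v^2 - 3*a*b^2 * v^3 + b^3 * v^4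
      = a' * r1 - b' - v * r1^3"
    unfolding assms(3) by algebra
  moreover have "r1 * r2 = a' * r1 - b'" using assms(1,4) by (simp add: field_simps)
  then have "r0 / r1 * (a' * r1 - b' - v * r1^3) = r0 / r1 * (r1 * r2 - v * r1^3)" by simp
  also have "\<dots> = r0 * r2 - (r0 * v) * r1^2"
    using assms(1) by (simp add: field_simps power2_eq_square power3_eq_cube)
  finally show ?thesis using assms(2) by simp
qed

text \<open>The quartic of \<open>two_step_recurrence_gap\<close> at \<open>v = s / ratio_lb x y\<close>, with its denominators
  cleared.\<close>

definition gap_coeff_0 :: "real \<Rightarrow> real \<Rightarrow> real" where
  "gap_coeff_0 x y = (x+y+2)^2 * (y+2)^2
     * (bm_rec_a x (x+y+1) * bm_rec_a x (x+y) - bm_rec_b x (x+y+1) * (y+2)) * lb_num x y^4"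

definition gap_coeff_1 :: "real \<Rightarrow> real \<Rightarrow> real" where
  "gap_coeff_1 x y = - ((y+1) * lb_den x y * lb_num x y^3
     * ((x+y+2)^2 * (y+2)^2 * bm_rec_a x (x+y+1) * bm_rec_b x (x+y)
        + (x+y+1) * (x+y+3) * (y+3) * bm_rec_a x (x+y)^3))"

definition gap_coeff_2 :: "real \<Rightarrow> real \<Rightarrow> real" where
  "gap_coeff_2 x y = 3 * (x+y+1) * (x+y+3) * (y+3) * (y+1)^2 * lb_den x y^2
     * bm_rec_a x (x+y)^2 * bm_rec_b x (x+y) * lb_num x y^2"

definition gap_coeff_3 :: "real \<Rightarrow> real \<Rightarrow> real" where
  "gap_coeff_3 x y = - (3 * (x+y+1) * (x+y+3) * (y+3) * (y+1)^3 * lb_den x y^3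
     * bm_rec_a x (x+y) * bm_rec_b x (x+y)^2 * lb_num x y)"

definition gap_coeff_4 :: "real \<Rightarrow> real \<Rightarrow> real" where
  "gap_coeff_4 x y = (x+y+1) * (x+y+3) * (y+3) * (y+1)^4 * lb_den x y^4 * bm_rec_b x (x+y)^3"

lemma scaled_quartic_coeffs:
  fixes a b a' b' \<alpha> \<beta> \<alpha>' \<beta>' k1 k2 k3 n1 n2 n3 h n s :: real
  assumes "a = \<alpha> / (2*k2*n2)" and "b = \<beta> / (4*k2*n1*n2)"
    and "a' = \<alpha>' / (2*k3*n3)" and "b' = \<beta>' / (4*k3*n2*n3)"
    and "0 < k1" "0 < k2" "0 < k3" "0 < n1" "0 < n2" "0 < n3" "0 < h" "0 < n"
  defines "v \<equiv> 2*k1*n1*h/n * s"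
  shows "(a'*a - b' - (a'*b + a^3) * v + 3*a^2*b * v^2 - 3*a*b^2 * v^3 + b^3 * v^4)
      * (4*k3*k2^3*n2^3*n3*n^4)
    = n2^2*k2^2*(\<alpha>'*\<alpha> - \<beta>'*k2)*n^4 + - (k1*h*n^3*(n2^2*k2^2*\<alpha>'*\<beta> + n1*n3*k3*\<alpha>^3)) * s
      + 3*n1*n3*k3*k1^2*h^2*\<alpha>^2*\<beta>*n^2 * s^2 + - (3*n1*n3*k3*k1^3*h^3*\<alpha>*\<beta>^2*n) * s^3
      + n1*n3*k3*k1^4*h^4*\<beta>^3 * s^4"
proof -
  define v0 where "v0 = 2*k1*n1*h/n"
  define W where "W = 4*k3*k2^3*n2^3*n3*n^4"
  have c: "(a'*a - b')*W = n2^2*k2^2*(\<alpha>'*\<alpha> - \<beta>'*k2)*n^4"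
    "(-(a'*b + a^3))*v0*W = -(k1*h*n^3*(n2^2*k2^2*\<alpha>'*\<beta> + n1*n3*k3*\<alpha>^3))"
    "(3*a^2*b)*v0^2*W = 3*n1*n3*k3*k1^2*h^2*\<alpha>^2*\<beta>*n^2"
    "(-3*a*b^2)*v0^3*W = -(3*n1*n3*k3*k1^3*h^3*\<alpha>*\<beta>^2*n)"
    "(b^3)*v0^4*W = n1*n3*k3*k1^4*h^4*\<beta>^3"
    using assms(5-) unfolding assms(1-4) v0_def W_def
    by (simp_all add: field_simps power2_eq_square power3_eq_cube)
      (simp_all add: power_def algebra_simps)
  have "(a'*a - b' - (a'*b + a^3) * v + 3*a^2*b * v^2 - 3*a*b^2 * v^3 + b^3 * v^4) * W
    = (a'*a - b')*W + ((-(a'*b + a^3))*v0*W)*s + ((3*a^2*b)*v0^2*W)*s^2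
      + ((-3*a*b^2)*v0^3*W)*s^3 + ((b^3)*v0^4*W)*s^4"
    unfolding v_def v0_def by algebra
  then show ?thesis unfolding c by (simp only: W_def)
qed

lemma gap_quartic_scaled:
  fixes x y s :: real
  assumes "0 < x" "0 \<le> y"
  defines "a \<equiv> ratio_rec_a x y" and "b \<equiv> ratio_rec_b x y"
    and "a' \<equiv> ratio_rec_a x (y+1)" and "b' \<equiv> ratio_rec_b x (y+1)"
  shows "(a'*a - b' - (a'*b + a^3) * (s / ratio_lb x y) + 3*a^2*b * (s / ratio_lb x y)^2
        - 3*a*b^2 * (s / ratio_lb x y)^3 + b^3 * (s / ratio_lb x y)^4)
      * (4*(y+3)*(y+2)^3*(x+y+2)^3*(x+y+3)*lb_num x y^4)
    = gap_coeff_0 x y + gap_coeff_1 x y * s + gap_coeff_2 x y * s^2 + gap_coeff_3 x y * s^3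
      + gap_coeff_4 x y * s^4"
proof -
  have "s / ratio_lb x y = 2*(y+1)*(x+y+1)*lb_den x y/lb_num x y * s"
    unfolding ratio_lb_def by simp
  moreover have "a' = bm_rec_a x (x+y+1) / (2*(y+3)*(x+y+3))"
    "b' = bm_rec_b x (x+y+1) / (4*(y+3)*(x+y+2)*(x+y+3))"
    unfolding a'_def b'_def ratio_rec_a_def ratio_rec_b_def by (simp_all add: algebra_simps)
  ultimately show ?thesis
    unfolding gap_coeff_0_def gap_coeff_1_def gap_coeff_2_def gap_coeff_3_def gap_coeff_4_def
    using scaled_quartic_coeffs[of a "bm_rec_a x (x+y)" "y+2" "x+y+2" b "bm_rec_b x (x+y)" "x+y+1"
        a' "bm_rec_a x (x+y+1)" "y+3" "x+y+3" b' "bm_rec_b x (x+y+1)" "y+1"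
        "lb_den x y" "lb_num x y" s]
      assms lb_den_pos lb_num_pos
    by (simp add: a_def b_def ratio_rec_a_def ratio_rec_b_def)
qed

lemma gap_coeff_0_factor_pos:
  fixes x y :: real
  assumes "x = real j + 1" and "y = real p"
  shows "0 < bm_rec_a x (x+y+1) * bm_rec_a x (x+y) - bm_rec_b x (x+y+1) * (y+2)"
proof -
  have "bm_rec_a x (x+y+1) * bm_rec_a x (x+y) - bm_rec_b x (x+y+1) * (y+2) =
      real (3321 + 4806*p + 2529*p^2 + 576*p^3 + 48*p^4 + 3956*j + 4482*j*p + 1632*j*p^2 + 192*j*p^3 +
        1592*j^2 + 1248*j^2*p + 240*j^2*p^2 + 256*j^3 + 96*j^3*p + 16*j^4)" (is "_ = real ?n")
    unfolding assms bm_rec_a_def bm_rec_b_def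
    by (simp only: of_nat_add of_nat_mult of_nat_power of_nat_numeral of_nat_1) algebra
  moreover have "0 < ?n" by simp
  ultimately show ?thesis by (simp only: of_nat_0_less_iff)
qed

lemma gap_bernstein_1_pos:
  fixes x y :: real
  assumes "x = real j + 1" and "y = real p"
  shows "0 < 4 * gap_coeff_0 x y + gap_coeff_1 x y"
proof -
  have "4 * gap_coeff_0 x y + gap_coeff_1 x y =
      real (17650087272000 + 131176669406400*p + 459915055338960*p^2 + 1011094693032528*p^3 +
        1562622542788104*p^4 + 1803974325050312*p^5 + 1613581552325636*p^6 + 1144661076360520*p^7 +
        653828901918750*p^8 + 303570609118202*p^9 + 115154825455792*p^10 + 35739506331001*p^11 +
        9056569124802*p^12 + 1863098896305*p^13 + 308030783024*p^14 + 40291438712*p^15 +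
        4071170848*p^16 + 306220544*p^17 + 16129024*p^18 + 530432*p^19 + 8192*p^20 +
        192102386594400*j + 1365881343023520*j*p + 4569629439684024*j*p^2 + 9558430529048808*j*p^3 +
        14009654510543312*j*p^4 + 15282013923903044*j*p^5 + 12861366624354182*j*p^6 +
        8542922795610930*j*p^7 + 4543218017942382*j*p^8 + 1950838562141125*j*p^9 +
        678929601608366*j*p^10 + 191440534473785*j*p^11 + 43543764977282*j*p^12 +
        7917103297584*j*p^13 + 1133622225024*j*p^14 + 124889253376*j*p^15 + 10206243072*j*p^16 +
        582245376*j*p^17 + 20680704*j*p^18 + 344064*j*p^19 + 981188420762160*j^2 +
        6658624318339944*j^2*p + 21201774360493716*j^2*p^2 + 42074224479002544*j^2*p^3 +
        58295552034915266*j^2*p^4 + 59867557124077224*j^2*p^5 + 47213028187453236*j^2*p^6 +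
        29226659981949114*j^2*p^7 + 14393198374411171*j^2*p^8 + 5679788377184450*j^2*p^9 +
        1799940976916542*j^2*p^10 + 456948252873064*j^2*p^11 + 92245591622093*j^2*p^12 +
        14611470266300*j^2*p^13 + 1777394522344*j^2*p^14 + 160497164864*j^2*p^15 +
        10174290176*j^2*p^16 + 409176064*j^2*p^17 + 8321024*j^2*p^18 + 32768*j^2*p^19 +
        3127822196316048*j^3 + 20208673798062804*j^3*p + 61071121442551986*j^3*p^2 +
        114621978245801382*j^3*p^3 + 149606241522993726*j^3*p^4 + 144077305182791168*j^3*p^5 +
        105993318085665322*j^3*p^6 + 60834631211107982*j^3*p^7 + 27576740152785864*j^3*p^8 +
        9930314549163795*j^3*p^9 + 2841391902263624*j^3*p^10 + 642740163866487*j^3*p^11 +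
        113667974330936*j^3*p^12 + 15421229647832*j^3*p^13 + 1557107565504*j^3*p^14 +
        111401809920*j^3*p^15 + 5185080320*j^3*p^16 + 132241408*j^3*p^17 + 1146880*j^3*p^18 +
        6981640010363052*j^4 + 42830472901873122*j^4*p + 122479195755455730*j^4*p^2 +
        216683221806701853*j^4*p^3 + 265414851222852414*j^4*p^4 + 238666747929770431*j^4*p^5 +
        162984163281239262*j^4*p^6 + 86236899543186020*j^4*p^7 + 35743212612816961*j^4*p^8 +
        11652095789808900*j^4*p^9 + 2981471903210459*j^4*p^10 + 593809596502200*j^4*p^11 +
        90606410775384*j^4*p^12 + 10317927826256*j^4*p^13 + 840627434272*j^4*p^14 +
        45651096192*j^4*p^15 + 1450045952*j^4*p^16 + 20129792*j^4*p^17 + 49152*j^4*p^18 +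
        11604317054529510*j^5 + 67401167651547021*j^5*p + 181798376734872582*j^5*p^2 +
        302069990836126231*j^5*p^3 + 345809422436571070*j^5*p^4 + 288987187559796238*j^5*p^5 +
        182197089285193002*j^5*p^6 + 88309836458213190*j^5*p^7 + 33216949164065668*j^5*p^8 +
        9715056467337164*j^5*p^9 + 2198523271313744*j^5*p^10 + 380212893701668*j^5*p^11 +
        49160343050400*j^5*p^12 + 4585491887808*j^5*p^13 + 291037808896*j^5*p^14 +
        11355550720*j^5*p^15 + 223313920*j^5*p^16 + 1376256*j^5*p^17 + 14911390311509817*j^6 +
        81748302961612428*j^6*p + 207255042619405580*j^6*p^2 + 322156031200294287*j^6*p^3 +
        343139705848894473*j^6*p^4 + 265116933585098312*j^6*p^5 + 153387936215471966*j^6*p^6 +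
        67623013992422975*j^6*p^7 + 22888043037057118*j^6*p^8 + 5944055057958128*j^6*p^9 +
        1174480546140024*j^6*p^10 + 173492844051472*j^6*p^11 + 18598825466368*j^6*p^12 +
        1378678691520*j^6*p^13 + 65190310528*j^6*p^14 + 1700791296*j^6*p^15 + 18176000*j^6*p^16 +
        32768*j^6*p^17 + 15180710106374160*j^7 + 78292871700152282*j^7*p +
        185873337560508032*j^7*p^2 + 269126363484050097*j^7*p^3 + 265393727011372872*j^7*p^4 +
        188490662900340447*j^7*p^5 + 99404639467470276*j^7*p^6 + 39541931373111714*j^7*p^7 +
        11926437097502064*j^7*p^8 + 2717384411350240*j^7*p^9 + 461714032580032*j^7*p^10 +
        57108142057264*j^7*p^11 + 4940386309504*j^7*p^12 + 279993858688*j^7*p^13 +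
        9298561024*j^7*p^14 + 146995200*j^7*p^15 + 688128*j^7*p^16 + 12448393600436034*j^8 +
        60180028659230042*j^8*p + 133240400818287900*j^8*p^2 + 178857547332310858*j^8*p^3 +
        162404454258879427*j^8*p^4 + 105352641023344366*j^8*p^5 + 50259130358553893*j^8*p^6 +
        17873716522590772*j^8*p^7 + 4749858172967072*j^8*p^8 + 936001100483024*j^8*p^9 +
        134245234177776*j^8*p^10 + 13560696573248*j^8*p^11 + 914094503680*j^8*p^12 +
        37599903232*j^8*p^13 + 806669824*j^8*p^14 + 6594560*j^8*p^15 + 8192*j^8*p^16 +
        8314030207970634*j^9 + 37528810202835873*j^9*p + 77141637182511786*j^9*p^2 +
        95506456976422404*j^9*p^3 + 79365193715823792*j^9*p^4 + 46685096577435279*j^9*p^5 +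
        19971104191973544*j^9*p^6 + 6281730372629384*j^9*p^7 + 1451044366895392*j^9*p^8 +
        243013412578608*j^9*p^9 + 28739881383552*j^9*p^10 + 2294801676864*j^9*p^11 +
        114878831616*j^9*p^12 + 3178257408*j^9*p^13 + 38371328*j^9*p^14 + 114688*j^9*p^15 +
        4555073476600617*j^10 + 19116692031275704*j^10*p + 36301980040560974*j^10*p^2 +
        41212424151670454*j^10*p^3 + 31127140320210615*j^10*p^4 + 16465518207186120*j^10*p^5 +
        6251870518216968*j^10*p^6 + 1717014716509744*j^10*p^7 + 339064997805664*j^10*p^8 +
        47198243578944*j^10*p^9 + 4462312002304*j^10*p^10 + 269118902784*j^10*p^11 +
        9310414080*j^10*p^12 + 152207360*j^10*p^13 + 757760*j^10*p^14 + 2055417369941128*j^11 +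
        7982710639215116*j^11*p + 13927577115444442*j^11*p^2 + 14404164538961674*j^11*p^3 +
        9810257312664992*j^11*p^4 + 4621423111069300*j^11*p^5 + 1538477729424288*j^11*p^6 +
        363110250402960*j^11*p^7 + 60008386869120*j^11*p^8 + 6739913717952*j^11*p^9 +
        487635382272*j^11*p^10 + 20724152832*j^11*p^11 + 437141504*j^11*p^12 + 3129344*j^11*p^13 +
        764836569590248*j^12 + 2734682156861504*j^12*p + 4356735529992024*j^12*p^2 +
        4074187885896072*j^12*p^3 + 2479138802822680*j^12*p^4 + 1027964854590592*j^12*p^5 +
        295510724684240*j^12*p^6 + 58726013355968*j^12*p^7 + 7892980861312*j^12*p^8 +
        685673814528*j^12*p^9 + 35484997632*j^12*p^10 + 939974656*j^12*p^11 + 8998912*j^12*p^12 +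
        234375604516768*j^13 + 767074347277344*j^13*p + 1108092825040352*j^13*p^2 +
        928839591525168*j^13*p^3 + 499408113999072*j^13*p^4 + 179646545769168*j^13*p^5 +
        43729705453184*j^13*p^6 + 7117728458944*j^13*p^7 + 746694872576*j^13*p^8 +
        46965482496*j^13*p^9 + 1540579328*j^13*p^10 + 18980864*j^13*p^11 + 58906501888944*j^14 +
        175333240509504*j^14*p + 227809370401520*j^14*p^2 + 169398651994464*j^14*p^3 +
        79381991171008*j^14*p^4 + 24312733366784*j^14*p^5 + 4879558389632*j^14*p^6 +
        625027302912*j^14*p^7 + 47972242944*j^14*p^8 + 1938841600*j^14*p^9 + 30134272*j^14*p^10 +
        12056058068736*j^15 + 32395967280768*j^15*p + 37499646819008*j^15*p^2 +
        24422757932160*j^15*p^3 + 9799810647296*j^15*p^4 + 2491099777728*j^15*p^5 +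
        396549604864*j^15*p^6 + 37517787136*j^15*p^7 + 1872388096*j^15*p^8 + 36405248*j^15*p^9 +
        1987182952704*j^16 + 4780162678784*j^16*p + 4873161664512*j^16*p^2 +
        2734762922880*j^16*p^3 + 917265805440*j^16*p^4 + 186441979904*j^16*p^5 +
        22127200768*j^16*p^6 + 1376321536*j^16*p^7 + 33488896*j^16*p^8 + 259514942976*j^17 +
        553377820928*j^17*p + 489773870080*j^17*p^2 + 231688845056*j^17*p^3 + 62713441792*j^17*p^4 +
        9599979520*j^17*p^5 + 757473280*j^17*p^6 + 23265280*j^17*p^7 + 26209681152*j^18 +
        48971298816*j^18*p + 36934907904*j^18*p^2 + 14268263424*j^18*p^3 + 2944951552*j^18*p^4 +
        303587328*j^18*p^5 + 11988992*j^18*p^6 + 1972488192*j^19 + 3184749568*j^19*p +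
        1995278848*j^19*p^2 + 598343168*j^19*p^3 + 84631552*j^19*p^4 + 4440064*j^19*p^5 +
        104065024*j^20 + 142745600*j^20*p + 71534592*j^20*p^2 + 15138816*j^20*p^3 +
        1118208*j^20*p^4 + 3432448*j^21 + 3915776*j^21*p + 1474560*j^21*p^2 + 172032*j^21*p^3 +
        53248*j^22 + 49152*j^22*p + 12288*j^22*p^2)" (is "_ = real ?n")
    unfolding assms gap_coeff_0_def gap_coeff_1_def gap_coeff_2_def gap_coeff_3_def gap_coeff_4_def
      bm_rec_a_def bm_rec_b_def lb_den_def lb_num_def
    by (simp only: of_nat_add of_nat_mult of_nat_power of_nat_numeral of_nat_1) algebra
  moreover have "0 < ?n" by simp
  ultimately show ?thesis by (simp only: of_nat_0_less_iff)
qed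

lemma gap_bernstein_2_pos:
  fixes x y :: real
  assumes "x = real j + 1" and "y = real p"
  shows "0 < 6 * gap_coeff_0 x y + 3 * gap_coeff_1 x y + gap_coeff_2 x y"
proof -
  have "6 * gap_coeff_0 x y + 3 * gap_coeff_1 x y + gap_coeff_2 x y =
      real (14651363851200 + 102597181904160*p + 337952950127712*p^2 + 695812635050616*p^3 +
        1003556842959420*p^4 + 1076915129750232*p^5 + 891351918431376*p^6 + 582103154839590*p^7 +
        304264782992787*p^8 + 128368331108634*p^9 + 43878460627956*p^10 + 12147222228993*p^11 +
        2711397079383*p^12 + 483551047947*p^13 + 67875063834*p^14 + 7325814024*p^15 +
        586093632*p^16 + 32704512*p^17 + 1135104*p^18 + 18432*p^19 + 161289300245760*j +
        1078780834319904*j*p + 3384449275789584*j*p^2 + 6615546961568400*j*p^3 +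
        9025619249775804*j*p^4 + 9123670910911200*j*p^5 + 7079472934700262*j*p^6 +
        4309979991319476*j*p^7 + 2086250507314728*j*p^8 + 808638993646041*j*p^9 +
        251487116606256*j*p^10 + 62584563619167*j*p^11 + 12365890894050*j*p^12 +
        1913016287136*j*p^13 + 226544295936*j*p^14 + 19810337472*j*p^15 + 1204255488*j*p^16 +
        45401088*j*p^17 + 798720*j*p^18 + 833344625790432*j^2 + 5310766290814056*j^2*p +
        15825782657651472*j^2*p^2 + 29279853248236506*j^2*p^3 + 37658771321264655*j^2*p^4 +
        35722699877838342*j^2*p^5 + 25872437982268383*j^2*p^6 + 14609737612112466*j^2*p^7 +
        6510450582837432*j^2*p^8 + 2302180257213192*j^2*p^9 + 645927542974785*j^2*p^10 +
        142983887123406*j^2*p^11 + 24673193875677*j^2*p^12 + 3251852587092*j^2*p^13 +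
        316706035416*j^2*p^14 + 21576760512*j^2*p^15 + 930718464*j^2*p^16 + 20361216*j^2*p^17 +
        92160*j^2*p^18 + 2687640933031488*j^3 + 16276703201874684*j^3*p +
        45936482119502508*j^3*p^2 + 80180261799242562*j^3*p^3 + 96861779681826918*j^3*p^4 +
        85862325260269296*j^3*p^5 + 57767045184179214*j^3*p^6 + 30089072953113570*j^3*p^7 +
        12263836022309604*j^3*p^8 + 3925667359871889*j^3*p^9 + 984265786195170*j^3*p^10 +
        191507966566617*j^3*p^11 + 28416605787624*j^3*p^12 + 3124034346600*j^3*p^13 +
        242646042432*j^3*p^14 + 12257367552*j^3*p^15 + 341449728*j^3*p^16 + 3360768*j^3*p^17 +
        6070216280690844*j^4 + 34836620091794892*j^4*p + 92820342336437898*j^4*p^2 +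
        152308732578325581*j^4*p^3 + 172133056187643258*j^4*p^4 + 141942373783610829*j^4*p^5 +
        88247439076220661*j^4*p^6 + 42141360615102834*j^4*p^7 + 15597248838395013*j^4*p^8 +
        4480540871070066*j^4*p^9 + 993228002349768*j^4*p^10 + 167577811685136*j^4*p^11 +
        21003839993976*j^4*p^12 + 1878893137392*j^4*p^13 + 112124795232*j^4*p^14 +
        3942751104*j^4*p^15 + 62151168*j^4*p^16 + 178176*j^4*p^17 + 10210599290768472*j^5 +
        55360718488222371*j^5*p + 138787344324522702*j^5*p^2 + 213276442360922055*j^5*p^3 +
        224519309223520872*j^5*p^4 + 171373934061439326*j^5*p^5 + 97894205121400500*j^5*p^6 +
        42572146836288330*j^5*p^7 + 14194484716720662*j^5*p^8 + 3624040471585530*j^5*p^9 +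
        701787223201488*j^5*p^10 + 101101603434828*j^5*p^11 + 10484410429152*j^5*p^12 +
        740953527360*j^5*p^13 + 32442680064*j^5*p^14 + 730358784*j^5*p^15 + 5308416*j^5*p^16 +
        13280462884756116*j^6 + 67805105866784712*j^6*p + 159351858061066038*j^6*p^2 +
        228380868579417405*j^6*p^3 + 222889727670640458*j^6*p^4 + 156626919809216172*j^6*p^5 +
        81688455991164606*j^6*p^6 + 32111733408250941*j^6*p^7 + 9559740113161812*j^6*p^8 +
        2145752378556816*j^6*p^9 + 358044165647448*j^6*p^10 + 43262856473232*j^6*p^11 +
        3622122755520*j^6*p^12 + 195049653312*j^6*p^13 + 5901473664*j^6*p^14 + 75260928*j^6*p^15 +
        165888*j^6*p^16 + 13688147346702390*j^7 + 65578091800199640*j^7*p +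
        143903522685485016*j^7*p^2 + 191479361862785847*j^7*p^3 + 172356490795834896*j^7*p^4 +
        110839951057912785*j^7*p^5 + 52413162214519446*j^7*p^6 + 18470493373936884*j^7*p^7 +
        4860663904189104*j^7*p^8 + 947317338495000*j^7*p^9 + 134060099993760*j^7*p^10 +
        13301326892304*j^7*p^11 + 872434535040*j^7*p^12 + 34159262592*j^7*p^13 +
        656277504*j^7*p^14 + 3876864*j^7*p^15 + 11366786411358228*j^8 + 50904331087927104*j^8*p +
        103849487433067506*j^8*p^2 + 127661013096367722*j^8*p^3 + 105383356845051027*j^8*p^4 +
        61611673775494164*j^8*p^5 + 26210315566619697*j^8*p^6 + 8203230179364132*j^8*p^7 +
        1886500272496728*j^8*p^8 + 314657421385968*j^8*p^9 + 37054923316848*j^8*p^10 +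
        2940762121536*j^8*p^11 + 145310369280*j^8*p^12 + 3875916288*j^8*p^13 + 41551872*j^8*p^14 +
        73728*j^8*p^15 + 7690363124506236*j^9 + 32059689101793807*j^9*p +
        60518827141737678*j^9*p^2 + 68358232069994388*j^9*p^3 + 51425858843811882*j^9*p^4 +
        27132445055020593*j^9*p^5 + 10292904048646968*j^9*p^6 + 2830503647858568*j^9*p^7 +
        561247491370560*j^9*p^8 + 78730761759408*j^9*p^9 + 7534480792704*j^9*p^10 +
        462104337600*j^9*p^11 + 16289796096*j^9*p^12 + 268459008*j^9*p^13 + 1277952*j^9*p^14 +
        4269819952675908*j^10 + 16494663274468284*j^10*p + 28661492774936382*j^10*p^2 +
        29569086316947378*j^10*p^3 + 20130518674012284*j^10*p^4 + 9504986746708872*j^10*p^5 +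
        3183003717958752*j^10*p^6 + 759427959284112*j^10*p^7 + 127735662012624*j^10*p^8 +
        14741917740480*j^10*p^9 + 1110985984512*j^10*p^10 + 50171785728*j^10*p^11 +
        1162225920*j^10*p^12 + 10027008*j^10*p^13 + 12288*j^10*p^14 + 1953411679744902*j^11 +
        6957978639271362*j^11*p + 11065432572795480*j^11*p^2 + 10357074468182028*j^11*p^3 +
        6330394770081360*j^11*p^4 + 2649342095577252*j^11*p^5 + 773854931161824*j^11*p^6 +
        157736499232368*j^11*p^7 + 22043374946688*j^11*p^8 + 2032234994880*j^11*p^9 +
        115332172800*j^11*p^10 + 3561257472*j^11*p^11 + 47087616*j^11*p^12 + 147456*j^11*p^13 +
        737356715185368*j^12 + 2408423819245968*j^12*p + 3483152001706680*j^12*p^2 +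
        2935550206789704*j^12*p^3 + 1596219464285208*j^12*p^4 + 585428796739200*j^12*p^5 +
        146982316821216*j^12*p^6 + 25094833096896*j^12*p^7 + 2833192811904*j^12*p^8 +
        199994575872*j^12*p^9 + 7972856064*j^12*p^10 + 147849216*j^12*p^11 + 811008*j^12*p^12 +
        229354787362272*j^13 + 682773960526080*j^13*p + 891567395458752*j^13*p^2 +
        670755850808688*j^13*p^3 + 321000985353024*j^13*p^4 + 101747427947952*j^13*p^5 +
        21548257229184*j^13*p^6 + 3000015986496*j^13*p^7 + 262716799488*j^13*p^8 +
        13282286592*j^13*p^9 + 328507392*j^13*p^10 + 2703360*j^13*p^11 + 58553036311536*j^14 +
        157785817493760*j^14*p + 184520550335280*j^14*p^2 + 122677267755744*j^14*p^3 +
        50999281610400*j^14*p^4 + 13723845251328*j^14*p^5 + 2389576411008*j^14*p^6 +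
        260845499904*j^14*p^7 + 16606328064*j^14*p^8 + 532758528*j^14*p^9 + 6082560*j^14*p^10 +
        12181860053568*j^15 + 29487669639744*j^15*p + 30594411698688*j^15*p^2 +
        17758568969664*j^15*p^3 + 6307245928704*j^15*p^4 + 1406369267904*j^15*p^5 +
        193876666368*j^15*p^6 + 15579474432*j^15*p^7 + 640253952*j^15*p^8 + 9732096*j^15*p^9 +
        2042749453824*j^16 + 4402991099136*j^16*p + 4008604787712*j^16*p^2 +
        2000952593280*j^16*p^3 + 593653752192*j^16*p^4 + 105829240320*j^16*p^5 +
        10866306816*j^16*p^6 + 571908096*j^16*p^7 + 11354112*j^16*p^8 + 271615034880*j^17 +
        516077227776*j^17*p + 406867212288*j^17*p^2 + 171201198336*j^17*p^3 + 41053506048*j^17*p^4 +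
        5519324160*j^17*p^5 + 376455168*j^17*p^6 + 9732096*j^17*p^7 + 27950372352*j^18 +
        46266562560*j^18*p + 31070161920*j^18*p^2 + 10710865920*j^18*p^3 + 1966901760*j^18*p^4 +
        178520064*j^18*p^5 + 6082560*j^18*p^6 + 2144577024*j^19 + 3049843200*j^19*p +
        1707546624*j^19*p^2 + 460670976*j^19*p^3 + 58392576*j^19*p^4 + 2703360*j^19*p^5 +
        115402752*j^20 + 138633216*j^20*p + 62810112*j^20*p^2 + 12140544*j^20*p^3 +
        811008*j^20*p^4 + 3883008*j^21 + 3858432*j^21*p + 1351680*j^21*p^2 + 147456*j^21*p^3 +
        61440*j^22 + 49152*j^22*p + 12288*j^22*p^2)" (is "_ = real ?n")
    unfolding assms gap_coeff_0_def gap_coeff_1_def gap_coeff_2_def gap_coeff_3_def gap_coeff_4_def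
      bm_rec_a_def bm_rec_b_def lb_den_def lb_num_def
    by (simp only: of_nat_add of_nat_mult of_nat_power of_nat_numeral of_nat_1) algebra
  moreover have "0 < ?n" by simp
  ultimately show ?thesis by (simp only: of_nat_0_less_iff)
qed

lemma gap_bernstein_3_pos:
  fixes x y :: real
  assumes "x = real j + 1" and "y = real p"
  shows "0 < 4 * gap_coeff_0 x y + 3 * gap_coeff_1 x y + 2 * gap_coeff_2 x y + gap_coeff_3 x y"
proof -
  have "4 * gap_coeff_0 x y + 3 * gap_coeff_1 x y + 2 * gap_coeff_2 x y + gap_coeff_3 x y =
      real (5378837970240 + 35302602218976*p + 108607134968208*p^2 + 208024141615632*p^3 +
        277875623152800*p^4 + 274773641068050*p^5 + 208350528007902*p^6 + 123809304837309*p^7 +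
        58419082342758*p^8 + 22039341755955*p^9 + 6659942608830*p^10 + 1607270499666*p^11 +
        307301578950*p^12 + 45889921968*p^13 + 5231721660*p^14 + 439145280*p^15 + 25544832*p^16 +
        918528*p^17 + 15360*p^18 + 60116586604416*j + 376485070180752*j*p + 1101849237126360*j*p^2 +
        2000815707019824*j*p^3 + 2523819973219638*j*p^4 + 2345889957389487*j*p^5 +
        1663092327001016*j*p^6 + 918095732686337*j*p^7 + 399349979854240*j*p^8 +
        137579533174844*j*p^9 + 37518054496808*j*p^10 + 8047816229472*j*p^11 +
        1340436683366*j*p^12 + 169613882744*j*p^13 + 15736062256*j*p^14 + 1008030656*j*p^15 +
        39785216*j*p^16 + 728064*j*p^17 + 315144441406368*j^2 + 1878124582633752*j^2*p +
        5213372767417116*j^2*p^2 + 8944944930754704*j^2*p^3 + 10614615962779737*j^2*p^4 +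
        9234516746419798*j^2*p^5 + 6090704033410452*j^2*p^6 + 3105626030766004*j^2*p^7 +
        1236820020834911*j^2*p^8 + 385882790633028*j^2*p^9 + 93985136326010*j^2*p^10 +
        17681383162642*j^2*p^11 + 2519779657806*j^2*p^12 + 263315845576*j^2*p^13 +
        19102488176*j^2*p^14 + 870256320*j^2*p^15 + 19881728*j^2*p^16 + 89088*j^2*p^17 +
        1030537096907616*j^3 + 5827329893626236*j^3*p + 15292161502103898*j^3*p^2 +
        24700968728763246*j^3*p^3 + 27461188893368330*j^3*p^4 + 22255439330638241*j^3*p^5 +
        13581800611077586*j^3*p^6 + 6355598639257007*j^3*p^7 + 2299652962660368*j^3*p^8 +
        643669951308460*j^3*p^9 + 138361105870032*j^3*p^10 + 22475692243208*j^3*p^11 +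
        2682234787648*j^3*p^12 + 224240839232*j^3*p^13 + 12076304832*j^3*p^14 + 353731072*j^3*p^15 +
        3533824*j^3*p^16 + 2358379801637172*j^4 + 12613498877874420*j^4*p +
        31181813543822652*j^4*p^2 + 47227962436308600*j^4*p^3 + 48968015851631877*j^4*p^4 +
        36776602388234499*j^4*p^5 + 20640684708179023*j^4*p^6 + 8800791323008316*j^4*p^7 +
        2868219877711212*j^4*p^8 + 712539609944648*j^4*p^9 + 133339545940390*j^4*p^10 +
        18364491827583*j^4*p^11 + 1788715660660*j^4*p^12 + 115039507160*j^4*p^13 +
        4299548448*j^4*p^14 + 70283648*j^4*p^15 + 205312*j^4*p^16 + 4016913766587360*j^5 +
        20250637275332700*j^5*p + 46978198296474708*j^5*p^2 + 66428099592869081*j^5*p^3 +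
        63915825344231378*j^5*p^4 + 44229210316025368*j^5*p^5 + 22675903683335898*j^5*p^6 +
        8739229830932406*j^5*p^7 + 2540430683173714*j^5*p^8 + 553354065479165*j^5*p^9 +
        88737903777734*j^5*p^10 + 10143843693400*j^5*p^11 + 782094134208*j^5*p^12 +
        36883759296*j^5*p^13 + 878200576*j^5*p^14 + 6641664*j^5*p^15 + 5287027657409964*j^6 +
        25030042348911408*j^6*p + 54260605502060013*j^6*p^2 + 71288943819040842*j^6*p^3 +
        63305316562223199*j^6*p^4 + 40106697446371121*j^6*p^5 + 18643066790287556*j^6*p^6 +
        6436223458167600*j^6*p^7 + 1650527010167089*j^6*p^8 + 310876349806279*j^6*p^9 +
        41954256098337*j^6*p^10 + 3882945115556*j^6*p^11 + 228534861464*j^6*p^12 +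
        7455245376*j^6*p^13 + 101266816*j^6*p^14 + 237568*j^6*p^15 + 5511157033539312*j^7 +
        24402337566219672*j^7*p + 49206559332674400*j^7*p^2 + 59753606123977158*j^7*p^3 +
        48676225473312096*j^7*p^4 + 28035215918313504*j^7*p^5 + 11717026169283792*j^7*p^6 +
        3587182842856299*j^7*p^7 + 801476866654388*j^7*p^8 + 128483509722755*j^7*p^9 +
        14290261029968*j^7*p^10 + 1040182640616*j^7*p^11 + 44748390400*j^7*p^12 +
        937760128*j^7*p^13 + 6055936*j^7*p^14 + 4625958590842824*j^8 + 19072183767188604*j^8*p +
        35593523531306002*j^8*p^2 + 39719841234802964*j^8*p^3 + 29484297834069939*j^8*p^4 +
        15317269503695528*j^8*p^5 + 5702276514156633*j^8*p^6 + 1530644787089310*j^8*p^7 +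
        293777112324228*j^8*p^8 + 39362305909580*j^8*p^9 + 3521427346424*j^8*p^10 +
        194735685856*j^8*p^11 + 5797580448*j^8*p^12 + 69943808*j^8*p^13 + 142848*j^8*p^14 +
        3162077791607376*j^9 + 12079987627004396*j^9*p + 20749483328932064*j^9*p^2 +
        21143151114009349*j^9*p^3 + 14195900473502894*j^9*p^4 + 6594168147190644*j^9*p^5 +
        2163850444232646*j^9*p^6 + 502767244058051*j^9*p^7 + 81564058512704*j^9*p^8 +
        8943507868412*j^9*p^9 + 625153068928*j^9*p^10 + 25144647040*j^9*p^11 + 479476736*j^9*p^12 +
        2744320*j^9*p^13 + 1773077507456220*j^10 + 6242928531669360*j^10*p +
        9809340509416929*j^10*p^2 + 9062753393387826*j^10*p^3 + 5458594257807220*j^10*p^4 +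
        2245107481291224*j^10*p^5 + 641758968909809*j^10*p^6 + 127193840238152*j^10*p^7 +
        17117356178720*j^10*p^8 + 1497702049952*j^10*p^9 + 78851706128*j^10*p^10 +
        2170954240*j^10*p^11 + 23394560*j^10*p^12 + 40960*j^10*p^13 + 818983024329344*j^11 +
        2641959710217956*j^11*p + 3771728532738738*j^11*p^2 + 3134792912607494*j^11*p^3 +
        1678255289084260*j^11*p^4 + 604504066647104*j^11*p^5 + 148512732706544*j^11*p^6 +
        24685062661940*j^11*p^7 + 2694414682080*j^11*p^8 + 182183931072*j^11*p^9 +
        6865828864*j^11*p^10 + 117650944*j^11*p^11 + 565248*j^11*p^12 + 312057971396508*j^12 +
        916245771681976*j^12*p + 1179529273495440*j^12*p^2 + 874224484685968*j^12*p^3 +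
        411735201450644*j^12*p^4 + 128272283748880*j^12*p^5 + 26666794335736*j^12*p^6 +
        3642171687168*j^12*p^7 + 313319090496*j^12*p^8 + 15657191936*j^12*p^9 +
        390182912*j^12*p^10 + 3506176*j^12*p^11 + 4096*j^12*p^12 + 97971558440032*j^13 +
        259893456345712*j^13*p + 299164554289760*j^13*p^2 + 195801518949328*j^13*p^3 +
        80186151182208*j^13*p^4 + 21298874591776*j^13*p^5 + 3677704454240*j^13*p^6 +
        402132705344*j^13*p^7 + 26190340608*j^13*p^8 + 902000640*j^13*p^9 + 12894208*j^13*p^10 +
        40960*j^13*p^11 + 25245125998176*j^14 + 60003407321664*j^14*p + 61178717281472*j^14*p^2 +
        34971912092256*j^14*p^3 + 12288940933552*j^14*p^4 + 2735924337728*j^14*p^5 +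
        383157877328*j^14*p^6 + 32330781184*j^14*p^7 + 1495731712*j^14*p^8 + 31260672*j^14*p^9 +
        184320*j^14*p^10 + 5301732226368*j^15 + 11184232445760*j^15*p + 9993585342784*j^15*p^2 +
        4927795880832*j^15*p^3 + 1462812204480*j^15*p^4 + 267131666560*j^15*p^5 +
        29336973824*j^15*p^6 + 1800461312*j^15*p^7 + 52543488*j^15*p^8 + 491520*j^15*p^9 +
        897564936384*j^16 + 1662315788928*j^16*p + 1286240106752*j^16*p^2 + 539365683200*j^16*p^3 +
        132669375168*j^16*p^4 + 19274804224*j^16*p^5 + 1570826752*j^16*p^6 + 62619648*j^16*p^7 +
        860160*j^16*p^8 + 120514576896*j^17 + 193476944640*j^17*p + 127910097920*j^17*p^2 +
        44852966656*j^17*p^3 + 8901061120*j^17*p^4 + 978059264*j^17*p^5 + 53084160*j^17*p^6 +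
        1032192*j^17*p^7 + 12525598464*j^18 + 17170417664*j^18*p + 9556200448*j^18*p^2 +
        2742522880*j^18*p^3 + 420192512*j^18*p^4 + 31531008*j^18*p^5 + 860160*j^18*p^6 +
        970847232*j^19 + 1115762688*j^19*p + 514605568*j^19*p^2 + 116956672*j^19*p^3 +
        12623872*j^19*p^4 + 491520*j^19*p^5 + 52779008*j^20 + 49700864*j^20*p + 18716672*j^20*p^2 +
        3145728*j^20*p^3 + 184320*j^20*p^4 + 1794048*j^21 + 1343488*j^21*p + 409600*j^21*p^2 +
        40960*j^21*p^3 + 28672*j^22 + 16384*j^22*p + 4096*j^22*p^2)" (is "_ = real ?n")
    unfolding assms gap_coeff_0_def gap_coeff_1_def gap_coeff_2_def gap_coeff_3_def gap_coeff_4_def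
      bm_rec_a_def bm_rec_b_def lb_den_def lb_num_def
    by (simp only: of_nat_add of_nat_mult of_nat_power of_nat_numeral of_nat_1) algebra
  moreover have "0 < ?n" by simp
  ultimately show ?thesis by (simp only: of_nat_0_less_iff)
qed

lemma gap_bernstein_4_pos:
  fixes x y :: real
  assumes "x = real j + 1" and "y = real p"
  shows "0 < gap_coeff_0 x y + gap_coeff_1 x y + gap_coeff_2 x y + gap_coeff_3 x y + gap_coeff_4 x y"
proof -
  have "gap_coeff_0 x y + gap_coeff_1 x y + gap_coeff_2 x y + gap_coeff_3 x y + gap_coeff_4 x y =
      real (743483702016 + 4560196421088*p + 13065971128416*p^2 + 23219650152504*p^3 +
        28654954021692*p^4 + 26050853183300*p^5 + 18059208608681*p^6 + 9746460085495*p^7 +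
        4143909553521*p^8 + 1395215739203*p^9 + 371796053443*p^10 + 77925548958*p^11 +
        12681294923*p^12 + 1567816576*p^13 + 142127488*p^14 + 8897664*p^15 + 343296*p^16 +
        6144*p^17 + 8480106006912*j + 49654229182128*j*p + 135445781022480*j*p^2 +
        228447763723464*j*p^3 + 266630272680356*j*p^4 + 228324565540649*j*p^5 +
        148390925287898*j*p^6 + 74667073863921*j*p^7 + 29403373444848*j*p^8 + 9096110040754*j*p^9 +
        2205237815794*j*p^10 + 415295743408*j*p^11 + 59754476168*j*p^12 + 6392602780*j*p^13 +
        486607024*j*p^14 + 24463168*j*p^15 + 704768*j*p^16 + 8192*j*p^17 + 45277447982976*j^2 +
        252260938612584*j^2*p + 652695778170648*j^2*p^2 + 1040486458707402*j^2*p^3 +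
        1143104884220849*j^2*p^4 + 917046106671156*j^2*p^5 + 555233191081371*j^2*p^6 +
        258533946189432*j^2*p^7 + 93446632739242*j^2*p^8 + 26266024504898*j^2*p^9 +
        5711398165464*j^2*p^10 + 948367932678*j^2*p^11 + 117520924152*j^2*p^12 +
        10462560316*j^2*p^13 + 627390320*j^2*p^14 + 22441792*j^2*p^15 + 355584*j^2*p^16 +
        150515872695360*j^3 + 795096010055988*j^3*p + 1943565110732556*j^3*p^2 +
        2915201010131334*j^3*p^3 + 2999208424198812*j^3*p^4 + 2240727336890903*j^3*p^5 +
        1255101324802396*j^3*p^6 + 536346500765477*j^3*p^7 + 176159971078994*j^3*p^8 +
        44430686163092*j^3*p^9 + 8527221772828*j^3*p^10 + 1221896625778*j^3*p^11 +
        126490926940*j^3*p^12 + 8942673856*j^3*p^13 + 389407936*j^3*p^14 + 8290304*j^3*p^15 +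
        32768*j^3*p^16 + 349540800186096*j^4 + 1743934700418768*j^4*p + 4009978965058380*j^4*p^2 +
        5631340720483692*j^4*p^3 + 5394843131399571*j^4*p^4 + 3728921277465289*j^4*p^5 +
        1917421384889844*j^4*p^6 + 745048585743070*j^4*p^7 + 219857110121604*j^4*p^8 +
        49054337328216*j^4*p^9 + 8156975294529*j^4*p^10 + 983471468587*j^4*p^11 +
        81967349598*j^4*p^12 + 4335762872*j^4*p^13 + 122340256*j^4*p^14 + 1132416*j^4*p^15 +
        603110803626936*j^5 + 2830091632269300*j^5*p + 6092282827425552*j^5*p^2 +
        7966943370282619*j^5*p^3 + 7062613188233932*j^5*p^4 + 4483431289582414*j^5*p^5 +
        2098050397518852*j^5*p^6 + 733542210572180*j^5*p^7 + 191973847414290*j^5*p^8 +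
        37271020894515*j^5*p^9 + 5253699858078*j^5*p^10 + 516968529820*j^5*p^11 +
        33130666560*j^5*p^12 + 1212602752*j^5*p^13 + 18834176*j^5*p^14 + 49152*j^5*p^15 +
        802832151353760*j^6 + 3526962023210184*j^6*p + 7070887743320708*j^6*p^2 +
        8558825211133578*j^6*p^3 + 6971989376685531*j^6*p^4 + 4031473363150893*j^6*p^5 +
        1700027899586649*j^6*p^6 + 528417077022800*j^6*p^7 + 120811799886441*j^6*p^8 +
        20015900994007*j^6*p^9 + 2329781962869*j^6*p^10 + 180217139744*j^6*p^11 +
        8377854584*j^6*p^12 + 191454592*j^6*p^13 + 1324928*j^6*p^14 + 845048718201192*j^7 +
        3458012757738992*j^7*p + 6419038770761546*j^7*p^2 + 7143616001506092*j^7*p^3 +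
        5305258151766454*j^7*p^4 + 2768245300685464*j^7*p^5 + 1040055194265660*j^7*p^6 +
        283397525710513*j^7*p^7 + 55603986829084*j^7*p^8 + 7679571789979*j^7*p^9 +
        714718381364*j^7*p^10 + 41461511048*j^7*p^11 + 1297263040*j^7*p^12 + 16196480*j^7*p^13 +
        32768*j^7*p^14 + 715166740668912*j^8 + 2710640424030080*j^8*p + 4628721744300480*j^8*p^2 +
        4700242344548824*j^8*p^3 + 3153935122274237*j^8*p^4 + 1469090231970038*j^8*p^5 +
        485293014290224*j^8*p^6 + 114008012849022*j^8*p^7 + 18787895019002*j^8*p^8 +
        2101525578386*j^8*p^9 + 150152728183*j^8*p^10 + 6145905600*j^8*p^11 + 117108432*j^8*p^12 +
        644096*j^8*p^13 + 492154855704048*j^9 + 1716880345022412*j^9*p + 2677199249298316*j^9*p^2 +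
        2459150255339683*j^9*p^3 + 1475544338306248*j^9*p^4 + 605824054524704*j^9*p^5 +
        173201647996744*j^9*p^6 + 34379798344493*j^9*p^7 + 4633157500052*j^9*p^8 +
        404538420628*j^9*p^9 + 21030945664*j^9*p^10 + 558169312*j^9*p^11 + 5531136*j^9*p^12 +
        8192*j^9*p^13 + 277424171422656*j^10 + 884391565036208*j^10*p + 1248763696574820*j^10*p^2 +
        1027227830770376*j^10*p^3 + 544464030521096*j^10*p^4 + 194083527735512*j^10*p^5 +
        47106681315225*j^10*p^6 + 7703392812608*j^10*p^7 + 820188093335*j^10*p^8 +
        53198372544*j^10*p^9 + 1863457520*j^10*p^10 + 27950080*j^10*p^11 + 102144*j^10*p^12 +
        128628478386568*j^11 + 371646529618308*j^11*p + 470559386539646*j^11*p^2 +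
        342563569275648*j^11*p^3 + 158059881643654*j^11*p^4 + 48018528581530*j^11*p^5 +
        9657431634066*j^11*p^6 + 1258940679022*j^11*p^7 + 101023739392*j^11*p^8 +
        4525523648*j^11*p^9 + 93873664*j^11*p^10 + 584192*j^11*p^11 + 49122614950432*j^12 +
        127412644981840*j^12*p + 142997431764308*j^12*p^2 + 90825420420960*j^12*p^3 +
        35829524643776*j^12*p^4 + 9061319453720*j^12*p^5 + 1462722283916*j^12*p^6 +
        145227705280*j^12*p^7 + 8184654704*j^12*p^8 + 223408640*j^12*p^9 + 2036736*j^12*p^10 +
        15432330521704*j^13 + 35528735812360*j^13*p + 34855535068560*j^13*p^2 +
        18978409273728*j^13*p^3 + 6255899628360*j^13*p^4 + 1276735633752*j^13*p^5 +
        158216147840*j^13*p^6 + 11164711648*j^13*p^7 + 390648320*j^13*p^8 + 4841472*j^13*p^9 +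
        3972281143968*j^14 + 8006652835904*j^14*p + 6748642457296*j^14*p^2 +
        3079988851360*j^14*p^3 + 822872378672*j^14*p^4 + 129720300224*j^14*p^5 +
        11527463312*j^14*p^6 + 511699456*j^14*p^7 + 8296960*j^14*p^8 + 831728980608*j^15 +
        1442967556096*j^15*p + 1022066216064*j^15*p^2 + 379415975040*j^15*p^3 +
        78690338368*j^15*p^4 + 8957502720*j^15*p^5 + 505633280*j^15*p^6 + 10548224*j^15*p^7 +
        140090748864*j^16 + 204661661056*j^16*p + 118257436928*j^16*p^2 + 34217387520*j^16*p^3 +
        5153064640*j^16*p^4 + 375464448*j^16*p^5 + 10064896*j^16*p^6 + 18669568512*j^17 +
        22301244672*j^17*p + 10076848640*j^17*p^2 + 2126804224*j^17*p^3 + 206282752*j^17*p^4 +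
        7196672*j^17*p^5 + 1920893952*j^18 + 1798857728*j^18*p + 595051776*j^18*p^2 +
        81293824*j^18*p^3 + 3800832*j^18*p^4 + 146966016*j^19 + 101030400*j^19*p +
        21719040*j^19*p^2 + 1438208*j^19*p^3 + 7862272*j^20 + 3522560*j^20*p + 368640*j^20*p^2 +
        262144*j^21 + 57344*j^21*p + 4096*j^22)" (is "_ = real ?n")
    unfolding assms gap_coeff_0_def gap_coeff_1_def gap_coeff_2_def gap_coeff_3_def gap_coeff_4_def
      bm_rec_a_def bm_rec_b_def lb_den_def lb_num_def
    by (simp only: of_nat_add of_nat_mult of_nat_power of_nat_numeral of_nat_1) algebra
  moreover have "0 < ?n" by simp
  ultimately show ?thesis by (simp only: of_nat_0_less_iff)
qed

lemma gap_quartic_pos: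
  fixes x y s :: real
  assumes xy: "x = real j + 1" "y = real p" and s: "0 \<le> s" "s \<le> 1"
  defines "a \<equiv> ratio_rec_a x y" and "b \<equiv> ratio_rec_b x y"
    and "a' \<equiv> ratio_rec_a x (y+1)" and "b' \<equiv> ratio_rec_b x (y+1)" and "v \<equiv> s / ratio_lb x y"
  shows "0 < a'*a - b' - (a'*b + a^3) * v + 3*a^2*b * v^2 - 3*a*b^2 * v^3 + b^3 * v^4"
proof (rule zero_less_mult_pos2)
  have "0 < gap_coeff_0 x y"
    using gap_coeff_0_factor_pos[OF xy] lb_num_pos[of x y] xy unfolding gap_coeff_0_def by simp
  then have "0 < gap_coeff_0 x y + gap_coeff_1 x y * s + gap_coeff_2 x y * s^2
      + gap_coeff_3 x y * s^3 + gap_coeff_4 x y * s^4"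
    by (rule quartic_pos_bernstein[OF s _ gap_bernstein_1_pos[OF xy] gap_bernstein_2_pos[OF xy]
          gap_bernstein_3_pos[OF xy] gap_bernstein_4_pos[OF xy]])
  moreover have "(a'*a - b' - (a'*b + a^3) * v + 3*a^2*b * v^2 - 3*a*b^2 * v^3 + b^3 * v^4)
      * (4*(y+3)*(y+2)^3*(x+y+2)^3*(x+y+3)*lb_num x y^4)
    = gap_coeff_0 x y + gap_coeff_1 x y * s + gap_coeff_2 x y * s^2
      + gap_coeff_3 x y * s^3 + gap_coeff_4 x y * s^4" (is "?q * ?w = _")
    unfolding a_def b_def a'_def b'_def v_def by (rule gap_quartic_scaled) (use xy in auto)
  ultimately show "0 < ?q * ?w" by (simp only:)
  show "0 < ?w" using lb_num_pos[of x y] xy by simp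
qed

lemma bm_ratio_log_convex:
  assumes "1 \<le> i"
  shows "bm_ratio i (p+1)^2 < bm_ratio i p * bm_ratio i (p+2)"
proof -
  obtain j where j: "real i = real j + 1"
    using assms by (cases i) auto
  define x where "x = real i"
  define y where "y = real p"
  have xy: "1 \<le> x" "0 \<le> y" using assms unfolding x_def y_def by auto
  define r0 where "r0 = bm_ratio i p"
  define r1 where "r1 = bm_ratio i (p+1)"
  define r2 where "r2 = bm_ratio i (p+2)"
  have L: "0 < ratio_lb x y" "ratio_lb x y \<le> r0"
    using ratio_lb_pos bm_ratio_ge_lb[OF assms] xy unfolding x_def y_def r0_def by auto
  have "ratio_lb x (y+1) \<le> r1"
    using bm_ratio_ge_lb[OF assms, of "p+1"] unfolding x_def y_def r1_def by (simp add: add.commute)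
  moreover have "0 < ratio_lb x (y+1)" using ratio_lb_pos xy by simp
  ultimately have r1_pos: "0 < r1" by linarith
  define s where "s = ratio_lb x y / r0"
  have s: "0 \<le> s" "s \<le> 1" unfolding s_def using L by auto
  have "r0 * r2 - r1^2 = r0 / r1 * (ratio_rec_a x (y+1) * ratio_rec_a x y - ratio_rec_b x (y+1)
      - (ratio_rec_a x (y+1) * ratio_rec_b x y + ratio_rec_a x y^3) * (s / ratio_lb x y)
      + 3*ratio_rec_a x y^2*ratio_rec_b x y * (s / ratio_lb x y)^2
      - 3*ratio_rec_a x y*ratio_rec_b x y^2 * (s / ratio_lb x y)^3
      + ratio_rec_b x y^3 * (s / ratio_lb x y)^4)" (is "_ = _ * ?q")
  proof (rule two_step_recurrence_gap)
    show "r0 * (s / ratio_lb x y) = 1" unfolding s_def using L by simp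
    show "r1 = ratio_rec_a x y - ratio_rec_b x y * (s / ratio_lb x y)"
      unfolding r1_def s_def using bm_ratio_Suc[of i p] L unfolding r0_def x_def y_def by simp
    show "r2 = ratio_rec_a x (y+1) - ratio_rec_b x (y+1) / r1"
      using bm_ratio_Suc[of i "p+1"] unfolding r1_def r2_def x_def y_def by (simp add: add.commute)
  qed (use r1_pos in simp)
  moreover have "0 < ?q"
    using gap_quartic_pos[OF j[folded x_def] y_def s] .
  ultimately have "0 < r0 * r2 - r1^2"
    using L r1_pos by simp
  then show ?thesis unfolding r0_def r1_def r2_def by simp
qed

theorem theorem3p1:
  fixes i m :: nat
  assumes "i \<ge> 1" and "m \<ge> i + 2"
  shows "(boros_moll i m / boros_moll i (m - 1)) ^ 2
    < (boros_moll i (m - 1) / boros_moll i (m - 2)) * (boros_moll i (m + 1) / boros_moll i m)"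
proof -
  define p where "p = m - i - 2"
  have p: "m = i + p + 2" using assms(2) unfolding p_def by simp
  have "boros_moll i (m - 1) / boros_moll i (m - 2) = bm_ratio i p"
    using boros_moll_ratio[of i p] by (simp add: p)
  moreover have "boros_moll i m / boros_moll i (m - 1) = bm_ratio i (p+1)"
    using boros_moll_ratio[of i "p+1"] by (simp add: p)
  moreover have "boros_moll i (m + 1) / boros_moll i m = bm_ratio i (p+2)"
    using boros_moll_ratio[of i "p+2"] by (simp add: p)
  ultimately show ?thesis using bm_ratio_log_convex[OF assms(1)] by simp
qed

end
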